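(* Let $\alpha=[a_1,a_2,\dots]\in(0,1)$ be irrational and suppose there is $C\in\mathbb{R}$ with $|a_n|\le C$ for all $n\in\mathbb{N}$. Then for every nonnegative subadditive function $F:W_\alpha\to\mathbb{R}$ the limit $\lim_{|w|\to\infty,\,w\in W_\alpha}\frac{F(w)}{|w|}$ exists.
   Context: $\alpha=[a_1,a_2,\dots]$ denotes the continued fraction expansion $\alpha=1/(a_1+1/(a_2+\cdots))$. For $\theta\in[0,1)$, $v_{\alpha,\theta}$ is the two-sided infinite word over $\{0,1\}$ with letters $v_{\alpha,\theta}(n)=\chi_{[1-\alpha,1)}(n\alpha+\theta\bmod1)$; $W_\alpha$ is the set of all finite non-empty subwords of the words $v_{\alpha,\theta}$, $\theta\in[0,1)$, and $|w|$ is the length of $w$. A function $F:W_\alpha\to\mathbb{R}$ is subadditive if $F(ab)\le F(a)+F(b)$ for all $a,b\in W_\alpha$ with $ab\in W_\alpha$. The statement $\lim_{|w|\to\infty,\,w\in W_\alpha}G(w)=a$ means: for every $\epsilon>0$ there is $n_\epsilon$ with $|G(w)-a|\le\epsilon$ for all $w\in W_\alpha$ with $|w|\ge n_\epsilon$; the limit exists if this holds for some real $a$. *)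

theory Defs
  imports "HOL-Analysis.Analysis"
begin

fun gauss_iter :: "real \<Rightarrow> nat \<Rightarrow> real" where
  "gauss_iter x 0 = x"
| "gauss_iter x (Suc n) = frac (1 / gauss_iter x n)"

text \<open>Partial quotients a_1, a_2, ... of alpha = [a_1, a_2, ...] = 1/(a_1 + 1/(a_2 + ...)),
  indexed from 1: cf_digit alpha n = a_n for n >= 1.\<close>
definition cf_digit :: "real \<Rightarrow> nat \<Rightarrow> int" where
  "cf_digit x n = \<lfloor>1 / gauss_iter x (n - 1)\<rfloor>"

definition sturm :: "real \<Rightarrow> real \<Rightarrow> int \<Rightarrow> nat" where
  "sturm \<alpha> \<theta> n = (if frac (of_int n * \<alpha> + \<theta>) \<in> {1 - \<alpha>..<1} then 1 else 0)"

definition sturm_words :: "real \<Rightarrow> nat list set" where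
  "sturm_words \<alpha> = {w. w \<noteq> [] \<and> (\<exists>\<theta> \<in> {0..<1}. \<exists>k::int.
        w = map (\<lambda>i. sturm \<alpha> \<theta> (k + int i)) [0..<length w])}"

definition subadditive_on :: "nat list set \<Rightarrow> (nat list \<Rightarrow> real) \<Rightarrow> bool" where
  "subadditive_on W F \<longleftrightarrow>
     (\<forall>a\<in>W. \<forall>b\<in>W. a @ b \<in> W \<longrightarrow> F (a @ b) \<le> F a + F b)"

definition word_limit :: "nat list set \<Rightarrow> (nat list \<Rightarrow> real) \<Rightarrow> real \<Rightarrow> bool" where
  "word_limit W G L \<longleftrightarrow>
     (\<forall>\<epsilon>>0. \<exists>n\<^sub>\<epsilon>. \<forall>w\<in>W. length w \<ge> n\<^sub>\<epsilon> \<longrightarrow> \<bar>G w - L\<bar> \<le> \<epsilon>)"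

end

theory Submission
  imports Defs "HOL-Analysis.Kronecker_Approximation_Theorem"
begin

(* Bounded partial quotients make \<alpha> badly approximable, |q| |q\<alpha> - p| \<ge> c for q \<noteq> 0:
   along the Gauss map x = 1/(a + y) the pair (q, p) is reduced as in the Euclidean algorithm.
   The factor of length n of a Sturmian word, viewed as a function of its starting point z,
   only changes at the points N - i\<alpha> (i \<le> n), which are c/n-separated; so it is constant on
   an interval of length c/(2n).  By Dirichlet's theorem, with denominators bounded below by
   bad approximability, the rotation by \<alpha> enters every such interval within O(n) steps:
   Sturmian words are linearly recurrent.
   For subadditive F, f z n = F (factor of length n at z) is a subadditive cocycle over the
   rotation.  Fekete's lemma for M n = sup_z f z n gives f z n \<le> (a + o(1)) n uniformly,
   where a = inf_n M n / n.  Conversely, by linear recurrence every word of length K n contains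
   the factor at z among its first (K - 1) n positions, so f z n \<le> (a - \<epsilon>) n would force
   M (K n) < a K n for large n.  Hence F w / |w| converges to a uniformly. *)

section \<open>Bounded partial quotients and badly approximable numbers\<close>

definition badly_approximable :: "real \<Rightarrow> real \<Rightarrow> bool" where
  "badly_approximable c \<alpha> \<longleftrightarrow>
     0 < c \<and> (\<forall>q p :: int. q \<noteq> 0 \<longrightarrow> c \<le> \<bar>of_int q\<bar> * \<bar>of_int q * \<alpha> - of_int p\<bar>)"

lemma badly_approximableD:
  assumes "badly_approximable c \<alpha>" "q \<noteq> 0"
  shows "c \<le> \<bar>of_int q\<bar> * \<bar>of_int q * \<alpha> - of_int p\<bar>"
  using assms unfolding badly_approximable_def by blast

lemma badly_approximableI:
  assumes "0 < c" and pos: "\<And>q p. 0 < q \<Longrightarrow> c \<le> of_int q * \<bar>of_int q * \<alpha> - of_int p\<bar>"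
  shows "badly_approximable c \<alpha>"
  unfolding badly_approximable_def
proof (intro conjI allI impI)
  fix q p :: int
  assume "q \<noteq> 0"
  show "c \<le> \<bar>of_int q\<bar> * \<bar>of_int q * \<alpha> - of_int p\<bar>"
  proof (cases "0 < q")
    case True
    then show ?thesis
      using pos[OF True] by simp
  next
    case False
    then have "c \<le> of_int (-q) * \<bar>of_int (-q) * \<alpha> - of_int (-p)\<bar>"
      using \<open>q \<noteq> 0\<close> by (intro pos) simp
    then show ?thesis
      using False by (simp add: abs_minus_commute)
  qed
qed (rule assms(1))

lemma badly_approximable_le_half:
  assumes "badly_approximable c \<alpha>"
  shows "c \<le> 1/2"
  using badly_approximableD[OF assms, of 1 "round \<alpha>"] of_int_round_abs_le[of \<alpha>]
  by (simp add: abs_minus_commute)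

lemma gauss_iter_unit_irrational:
  assumes "0 < x" "x < 1" "x \<notin> \<rat>"
  shows "0 < gauss_iter x n \<and> gauss_iter x n < 1 \<and> gauss_iter x n \<notin> \<rat>"
proof (induction n)
  case 0
  then show ?case using assms by simp
next
  case (Suc n)
  let ?y = "1 / gauss_iter x n"
  have "?y \<notin> \<rat>"
    using Suc Rats_divide[OF Rats_1, of ?y] by auto
  then have "frac ?y \<notin> \<rat>"
    using Rats_add[OF _ Rats_of_int, of "frac ?y" "\<lfloor>?y\<rfloor>"] by (auto simp: frac_def)
  moreover have "frac ?y \<noteq> 0"
    using \<open>?y \<notin> \<rat>\<close> Ints_subset_Rats by (auto simp: frac_eq_0_iff)
  ultimately show ?case
    by (simp add: frac_lt_1 order_le_neq_trans)
qed

lemma gauss_iter_Suc_recip: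
  assumes "0 < gauss_iter x n"
  shows "gauss_iter x n * (of_int (cf_digit x (Suc n)) + gauss_iter x (Suc n)) = 1"
  using assms by (simp add: cf_digit_def frac_def)

lemma cf_digit_pos:
  assumes "0 < gauss_iter x n" "gauss_iter x n < 1"
  shows "1 \<le> cf_digit x (Suc n)"
  using assms by (simp add: cf_digit_def le_floor_iff)

lemma gauss_iter_ge_if_bounded_cf_digits:
  fixes C :: real
  assumes "0 < \<alpha>" "\<alpha> < 1" "\<alpha> \<notin> \<rat>" and bounded: "\<forall>n\<ge>1. \<bar>cf_digit \<alpha> n\<bar> \<le> C"
  shows "1 / (C + 1) \<le> gauss_iter \<alpha> n"
proof -
  let ?x = "gauss_iter \<alpha> n" and ?y = "gauss_iter \<alpha> (Suc n)" and ?a = "cf_digit \<alpha> (Suc n)"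
  have x: "0 < ?x" "?x < 1" and y: "0 < ?y" "?y < 1"
    using gauss_iter_unit_irrational[OF assms(1-3)] by blast+
  have "?a \<le> C"
    using bounded[rule_format, of "Suc n"] by linarith
  moreover have "1 \<le> ?a"
    using cf_digit_pos[OF x] .
  ultimately have "?a + ?y \<le> C + 1" "0 < ?a + ?y"
    using y by linarith+
  moreover from this have "?x = 1 / (?a + ?y)"
    using gauss_iter_Suc_recip[OF x(1)] by (simp add: eq_divide_eq del: gauss_iter.simps)
  ultimately show ?thesis
    by (simp add: frac_le del: gauss_iter.simps)
qed

lemma cf_step_lower_bound:
  fixes x y a \<beta> p q d :: real
  assumes recip: "x * (a + y) = 1" and "0 < x" "1 \<le> a + \<beta>"
    and IH: "d * (1 + y * (1 / (a + \<beta>))) / 2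
      \<le> \<bar>(p * y - (q - a * p)) * (p + (q - a * p) * (1 / (a + \<beta>)))\<bar>"
  shows "d * (1 + x * \<beta>) / 2 \<le> \<bar>(q * x - p) * (q + p * \<beta>)\<bar>"
proof -
  let ?\<beta>' = "1 / (a + \<beta>)"
  have "- (x * (p * y - (q - a * p))) = q * x - p * (x * (a + y))"
    by (simp add: algebra_simps)
  then have "q * x - p = - (x * (p * y - (q - a * p)))"
    using recip by simp
  moreover have "q + p * \<beta> = (a + \<beta>) * (p + (q - a * p) * ?\<beta>')"
    using assms(3) by (simp add: field_simps)
  ultimately have Q_eq: "\<bar>(q * x - p) * (q + p * \<beta>)\<bar>
      = x * (a + \<beta>) * \<bar>(p * y - (q - a * p)) * (p + (q - a * p) * ?\<beta>')\<bar>"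
    using assms(2,3) by (simp add: abs_mult)
  have "x * (a + \<beta>) * (1 + y * ?\<beta>') = x * (a + y) + x * \<beta>"
    using assms(3) by (simp add: field_simps)
  then have "d * (1 + x * \<beta>) / 2 = d * (x * (a + \<beta>) * (1 + y * ?\<beta>')) / 2"
    unfolding recip by simp
  also have "\<dots> = x * (a + \<beta>) * (d * (1 + y * ?\<beta>') / 2)"
    by (simp add: mult_ac)
  also have "\<dots> \<le> \<bar>(q * x - p) * (q + p * \<beta>)\<bar>"
    unfolding Q_eq using IH assms(2,3) by (intro mult_left_mono) auto
  finally show ?thesis .
qed

lemma cf_base_lower_bound:
  fixes x y \<beta> :: real and a p q :: int
  assumes "0 < x" "0 < y" "y < 1" "1 \<le> a" "x * (a + y) = 1" "0 \<le> \<beta>" "0 \<le> p" "0 < q"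
    and "p = 0 \<or> q \<le> a * p"
  shows "x * y \<le> \<bar>(q * x - p) * (q + p * \<beta>)\<bar>"
  using assms(9)
proof
  assume "p = 0"
  have "1 \<le> real_of_int q"
    using assms(8) by simp
  then have "1 \<le> real_of_int q * q"
    using mult_mono[of 1 "real_of_int q" 1 "real_of_int q"] by simp
  then have "x * y \<le> q * q * x"
    using assms(1-3) mult_right_mono[of 1 "real_of_int q * q" x] mult_left_le[of y x] by simp
  then show ?thesis
    using \<open>p = 0\<close> assms(1) by (simp add: abs_mult)
next
  assume "q \<le> a * p"
  have p_pos: "1 \<le> p"
    using \<open>q \<le> a * p\<close> assms(7,8) by (cases "p = 0") auto
  have "x * y \<le> p * (x * y)"
    using mult_right_mono[of 1 "real_of_int p" "x * y"] p_pos assms(1,2) by simp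
  also have "\<dots> = p * (x * (a + y)) - a * p * x"
    by (simp add: algebra_simps)
  also have "\<dots> = p - a * p * x"
    using assms(5) by simp
  also have "\<dots> \<le> p - q * x"
    using \<open>q \<le> a * p\<close> mult_right_mono[of "real_of_int q" "a * p" x] assms(1)
    by (simp flip: of_int_mult)
  also have "\<dots> \<le> \<bar>(q * x - p) * (q + p * \<beta>)\<bar>"
  proof -
    have "1 \<le> q + p * \<beta>"
      using assms(6-8) by (simp add: add_increasing2)
    then have "\<bar>q * x - p\<bar> * 1 \<le> \<bar>(q * x - p) * (q + p * \<beta>)\<bar>"
      unfolding abs_mult by (intro mult_left_mono) auto
    then show ?thesis
      by simp
  qed
  finally show ?thesis .
qed

(* The induction on q is the Euclidean algorithm: one step x = 1/(a + y) of the Gauss map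
   replaces (q, p, \<beta>) by (p, q - a p, 1/(a + \<beta>)) (cf_step_lower_bound).  The parameter \<beta>
   is what makes the bound stable under this step; only \<beta> = 0 is used afterwards. *)
lemma cf_approx_lower_bound:
  fixes x :: "nat \<Rightarrow> real" and a :: "nat \<Rightarrow> int" and d \<beta> :: real and p q :: int
  assumes x_pos: "\<And>n. 0 < x n" and x_lt_1: "\<And>n. x n < 1" and a_pos: "\<And>n. 1 \<le> a n"
    and recip: "\<And>n. x n * (a n + x (Suc n)) = 1" and d_le: "\<And>n. d \<le> x n * x (Suc n)"
    and "0 \<le> \<beta>" "\<beta> \<le> 1" "0 \<le> p" "0 < q"
  shows "d * (1 + x n * \<beta>) / 2 \<le> \<bar>(q * x n - p) * (q + p * \<beta>)\<bar>"
  using assms(6-)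
proof (induction "nat q" arbitrary: q p n \<beta> rule: less_induct)
  case less
  consider "p = 0 \<or> q \<le> a n * p" | "0 < p" "a n * p < q"
    using less.prems by linarith
  then show ?case
  proof cases
    case 1
    have "0 \<le> x n * \<beta>" "x n * \<beta> \<le> 1"
      using x_pos[of n] x_lt_1[of n] less.prems by (auto simp: mult_le_one)
    then have "d * (1 + x n * \<beta>) / 2 \<le> max d 0"
      by (cases "0 \<le> d") (auto intro: mult_left_mono mult_nonpos_nonneg)
    also have "\<dots> \<le> x n * x (Suc n)"
      using d_le[of n] x_pos[of n] x_pos[of "Suc n"] by simp
    also have "\<dots> \<le> \<bar>(q * x n - p) * (q + p * \<beta>)\<bar>"
      using less.prems 1
      by (intro cf_base_lower_bound[OF x_pos x_pos x_lt_1 a_pos recip[of n]]) simp_all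
    finally show ?thesis .
  next
    case 2
    define \<beta>' where "\<beta>' = 1 / (a n + \<beta>)"
    have a\<beta>: "1 \<le> a n + \<beta>"
      using a_pos[of n] less.prems by linarith
    have "p \<le> a n * p"
      using 2 a_pos[of n] mult_right_mono[of 1 "a n" p] by simp
    then have "nat p < nat q"
      using 2 by (subst nat_less_eq_zless) linarith+
    moreover have "0 \<le> \<beta>'" "\<beta>' \<le> 1"
      using a\<beta> by (simp_all add: \<beta>'_def)
    moreover have "0 \<le> q - a n * p"
      using 2 by simp
    ultimately have "d * (1 + x (Suc n) * \<beta>') / 2
        \<le> \<bar>(p * x (Suc n) - of_int (q - a n * p)) * (p + of_int (q - a n * p) * \<beta>')\<bar>"
      using 2 less.hyps by blast
    then show ?thesis
      using cf_step_lower_bound[OF recip[of n] x_pos[of n] a\<beta>] by (simp add: \<beta>'_def)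
  qed
qed

lemma badly_approximable_if_bounded_cf_digits:
  fixes C :: real
  assumes "0 < \<alpha>" "\<alpha> < 1" "\<alpha> \<notin> \<rat>" and bounded: "\<forall>n\<ge>1. \<bar>cf_digit \<alpha> n\<bar> \<le> C"
  shows "badly_approximable (1 / (2 * (C + 1)\<^sup>2)) \<alpha>"
proof -
  define x where "x = gauss_iter \<alpha>"
  define a where "a n = cf_digit \<alpha> (Suc n)" for n
  have x_unit: "0 < x n" "x n < 1" for n
    using gauss_iter_unit_irrational[OF assms(1-3)] by (auto simp: x_def)
  have recip: "x n * (a n + x (Suc n)) = 1" for n
    using gauss_iter_Suc_recip x_unit by (simp add: x_def a_def)
  have a_pos: "1 \<le> a n" for n
    using cf_digit_pos x_unit by (simp add: x_def a_def)
  have C_pos: "1 \<le> C"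
    using bounded[rule_format, of 1] a_pos[of 0] by (simp add: a_def)
  define d where "d = 1 / (C + 1)\<^sup>2"
  have d_le: "d \<le> x n * x (Suc n)" for n
    using mult_mono[OF gauss_iter_ge_if_bounded_cf_digits[OF assms, of n]
        gauss_iter_ge_if_bounded_cf_digits[OF assms, of "Suc n"]] C_pos x_unit[of n]
    by (simp add: x_def d_def power2_eq_square)
  have d: "0 < d" "d \<le> 1"
    using C_pos by (auto simp: d_def)
  have "d / 2 \<le> of_int q * \<bar>of_int q * \<alpha> - of_int p\<bar>" if "0 < q" for q p :: int
  proof (cases "0 \<le> p")
    case True
    then show ?thesis
      using cf_approx_lower_bound[where x=x and a=a and d=d and \<beta>=0 and n=0,
          OF x_unit a_pos recip d_le _ _ True that] that
      by (simp add: x_def abs_mult mult.commute)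
  next
    case False
    have "0 < of_int q * \<alpha>" "of_int p \<le> (-1::real)"
      using False that \<open>0 < \<alpha>\<close> by auto
    then have "1 \<le> \<bar>of_int q * \<alpha> - of_int p\<bar>" "1 \<le> real_of_int q"
      using that by linarith+
    then show ?thesis
      using d mult_mono[of 1 "of_int q" 1 "\<bar>of_int q * \<alpha> - of_int p\<bar>"] by simp
  qed
  then show ?thesis
    using d by (intro badly_approximableI) (simp_all add: d_def mult.commute)
qed

section \<open>Sturmian words as mechanical words\<close>

(* The letter v_{\<alpha>,\<theta>}(k) is mech_letter \<alpha> z at z = k\<alpha> + \<theta>; factors are indexed by the real
   number z at which they start, so that skipping j letters is the rotation z \<mapsto> z + j\<alpha>. *)
definition mech_letter :: "real \<Rightarrow> real \<Rightarrow> nat" where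
  "mech_letter \<alpha> z = nat (\<lfloor>z + \<alpha>\<rfloor> - \<lfloor>z\<rfloor>)"

definition mech_word :: "real \<Rightarrow> real \<Rightarrow> nat \<Rightarrow> nat list" where
  "mech_word \<alpha> z n = map (\<lambda>i. mech_letter \<alpha> (z + real i * \<alpha>)) [0..<n]"

lemma length_mech_word [simp]: "length (mech_word \<alpha> z n) = n"
  by (simp add: mech_word_def)

lemma nth_mech_word [simp]: "i < n \<Longrightarrow> mech_word \<alpha> z n ! i = mech_letter \<alpha> (z + real i * \<alpha>)"
  by (simp add: mech_word_def)

lemma mech_letter_le_1:
  assumes "0 < \<alpha>" "\<alpha> < 1"
  shows "mech_letter \<alpha> z \<le> 1"
proof -
  have "\<lfloor>z + \<alpha>\<rfloor> \<le> \<lfloor>z + 1\<rfloor>"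
    using assms by (intro floor_mono) simp
  then show ?thesis
    by (simp add: mech_letter_def)
qed

lemma mech_word_add_int: "mech_word \<alpha> (z + of_int m) n = mech_word \<alpha> z n"
proof -
  have letter: "mech_letter \<alpha> (u + of_int m) = mech_letter \<alpha> u" for u
    using floor_add_int[of "u + \<alpha>" m] by (simp add: mech_letter_def add_ac)
  show ?thesis
    unfolding mech_word_def
  proof (intro map_cong refl)
    fix i
    show "mech_letter \<alpha> (z + of_int m + real i * \<alpha>) = mech_letter \<alpha> (z + real i * \<alpha>)"
      using letter[of "z + real i * \<alpha>"] by (simp add: add_ac)
  qed
qed

lemma mech_word_append:
  "mech_word \<alpha> z (m + n) = mech_word \<alpha> z m @ mech_word \<alpha> (z + real m * \<alpha>) n"
  by (rule nth_equalityI) (auto simp: nth_append algebra_simps of_nat_diff)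

lemma sturm_eq_mech_letter:
  assumes "0 < \<alpha>" "\<alpha> < 1"
  shows "sturm \<alpha> \<theta> k = mech_letter \<alpha> (of_int k * \<alpha> + \<theta>)"
proof -
  define t where "t = of_int k * \<alpha> + \<theta>"
  have "\<lfloor>t + \<alpha>\<rfloor> = \<lfloor>frac t + \<alpha>\<rfloor> + \<lfloor>t\<rfloor>"
    using floor_add_int[of "frac t + \<alpha>" "\<lfloor>t\<rfloor>"] by (simp add: frac_def)
  moreover have "\<lfloor>frac t + \<alpha>\<rfloor> = (if frac t \<in> {1 - \<alpha>..<1} then 1 else 0)"
    using assms frac_lt_1[of t] frac_ge_0[of t] by (auto simp: floor_eq_iff)
  ultimately show ?thesis
    by (simp add: sturm_def mech_letter_def t_def)
qed

lemma sturm_words_eq_mech_words: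
  assumes "0 < \<alpha>" "\<alpha> < 1"
  shows "sturm_words \<alpha> = {mech_word \<alpha> z n | z n. 1 \<le> n}"
proof (intro equalityI subsetI)
  fix w
  assume "w \<in> sturm_words \<alpha>"
  then obtain \<theta> k where w: "w \<noteq> []" "w = map (\<lambda>i. sturm \<alpha> \<theta> (k + int i)) [0..<length w]"
    unfolding sturm_words_def by blast
  then have "w = mech_word \<alpha> (of_int k * \<alpha> + \<theta>) (length w)"
    by (simp add: mech_word_def sturm_eq_mech_letter[OF assms] algebra_simps)
  moreover have "1 \<le> length w"
    using w(1) by (simp add: Suc_le_eq)
  ultimately show "w \<in> {mech_word \<alpha> z n | z n. 1 \<le> n}"
    by blast
next
  fix w
  assume "w \<in> {mech_word \<alpha> z n | z n. 1 \<le> n}"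
  then obtain z n where "1 \<le> n" "w = mech_word \<alpha> z n"
    by blast
  moreover have "mech_word \<alpha> z n = mech_word \<alpha> (frac z) n"
    using mech_word_add_int[of \<alpha> "frac z" "\<lfloor>z\<rfloor>" n] by (simp add: frac_def)
  ultimately show "w \<in> sturm_words \<alpha>"
    unfolding sturm_words_def
    by (auto intro!: bexI[of _ "frac z"] exI[of _ 0]
        simp: mech_word_def sturm_eq_mech_letter[OF assms] frac_lt_1 algebra_simps)
qed

section \<open>Linear recurrence\<close>

lemma badly_approximable_good_denominator:
  fixes \<alpha> \<delta> :: real
  assumes "badly_approximable c \<alpha>" "0 < \<delta>"
  obtains h k where "coprime h k" "0 < k" "k < 4 / (c * \<delta>) + 1" "1 / k < \<delta> / 4"
    "\<bar>of_int k * \<alpha> - of_int h\<bar> < \<delta> / 8"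
proof -
  have c: "0 < c" "c \<le> 1/2"
    using assms(1) badly_approximable_le_half[OF assms(1)] by (simp_all add: badly_approximable_def)
  define M where "M = nat \<lceil>4 / (c * \<delta>)\<rceil>"
  have M: "4 / (c * \<delta>) \<le> M" "M < 4 / (c * \<delta>) + 1" "0 < M"
    using c assms(2) ceiling_correct[of "4 / (c * \<delta>)"] by (auto simp: M_def)
  obtain h k where hk: "coprime h k" "0 < k" "k \<le> int M" "\<bar>of_int k * \<alpha> - of_int h\<bar> < 1 / M"
    using Dirichlet_approx_coprime[OF M(3)] by blast
  have "c \<le> of_int k * \<bar>of_int k * \<alpha> - of_int h\<bar>"
    using badly_approximableD[OF assms(1), of k h] hk(2) by simp
  also have "\<dots> < of_int k * (1 / M)"
    using hk(2,4) by (intro mult_strict_left_mono) simp_all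
  finally have "c * M < k"
    using M(3) by (simp add: field_simps)
  then have "4 / \<delta> < k"
    using mult_left_mono[OF M(1), of c] c assms(2) by simp
  then have "1 / k < \<delta> / 4"
    using assms(2) hk(2) by (simp add: field_simps)
  moreover have "1 / M \<le> c * \<delta> / 4"
    using M(1,3) c assms(2) by (simp add: field_simps)
  moreover have "c * \<delta> \<le> 1/2 * \<delta>"
    using c assms(2) by (intro mult_right_mono) simp_all
  moreover have "real_of_int k < 4 / (c * \<delta>) + 1"
    using hk(3) M(2) by linarith
  ultimately show ?thesis
    using that[of h k] hk by simp
qed

lemma coprime_congruence_solution:
  fixes h k r :: int
  assumes "coprime h k" "0 < k"
  obtains j N where "0 \<le> j" "j < k" "j * h = r + k * N"
proof -
  obtain u v where uv: "u * h + v * k = 1"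
    using bezout_int[of h k] assms(1) by (auto simp: coprime_iff_gcd_eq_1)
  define j where "j = (r * u) mod k"
  have j_eq: "j = r * u - (r * u div k) * k"
    by (simp add: j_def minus_div_mult_eq_mod)
  have "j * h = r * (u * h) - k * ((r * u div k) * h)"
    by (subst j_eq) (simp add: algebra_simps)
  also have "\<dots> = r + k * (- r * v - (r * u div k) * h)"
    using uv by (simp add: algebra_simps flip: eq_diff_eq)
  finally show ?thesis
    using that[of j] assms(2) by (simp add: j_def)
qed

lemma orbit_enters_interval:
  fixes \<alpha> b x \<delta> :: real
  assumes "badly_approximable c \<alpha>" "0 < \<delta>"
  obtains j :: nat and N :: int
  where "real j < 4 / (c * \<delta>)" "b < x + j * \<alpha> - N" "x + j * \<alpha> - N < b + \<delta>"
proof -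
  obtain h k where hk: "coprime h k" "0 < k" "k < 4 / (c * \<delta>) + 1" "1 / k < \<delta> / 4"
    and s_small: "\<bar>of_int k * \<alpha> - of_int h\<bar> < \<delta> / 8"
    using badly_approximable_good_denominator[OF assms] by blast
  define s where "s = of_int k * \<alpha> - of_int h"
  define y where "y = b + \<delta> / 2 - x"
  define r where "r = round (k * y)"
  obtain j N where j: "0 \<le> j" "j < k" "j * h = r + k * N"
    using coprime_congruence_solution[OF hk(1,2)] by blast
  have orbit_point: "x + j * \<alpha> - N = b + \<delta> / 2 + ((r - k * y) / k + j * s / k)"
  proof -
    have "j * \<alpha> = (j * h + j * s) / k"
      using hk(2) by (simp add: s_def field_simps)
    also have "\<dots> = (r + k * N + j * s) / k"
      using arg_cong[OF j(3), of real_of_int] by simp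
    also have "\<dots> = r / k + N + j * s / k"
      using hk(2) by (simp add: field_simps)
    finally show ?thesis
      using hk(2) by (simp add: y_def field_simps)
  qed
  have rounding_error: "\<bar>(r - k * y) / k\<bar> < \<delta> / 8"
  proof -
    have "\<bar>r - k * y\<bar> \<le> 1 / 2"
      using of_int_round_abs_le[of "k * y"] by (simp add: r_def abs_minus_commute)
    then show ?thesis
      using hk(2,4) by (simp add: abs_divide field_simps)
  qed
  have drift: "\<bar>j * s / k\<bar> < \<delta> / 8"
  proof -
    have "\<bar>j * s / k\<bar> \<le> \<bar>s\<bar>"
      using j hk(2) mult_right_mono[of "real_of_int j" "real_of_int k" "\<bar>s\<bar>"]
      by (simp add: abs_mult abs_divide divide_le_eq mult.commute)
    then show ?thesis
      using s_small unfolding s_def by linarith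
  qed
  have j_real: "real (nat j) = of_int j"
    using j(1) by simp
  show ?thesis
  proof (rule that[of "nat j" N], unfold j_real)
    show "of_int j < 4 / (c * \<delta>)"
      using j(2) hk(3) by linarith
    show "b < x + of_int j * \<alpha> - of_int N" "x + of_int j * \<alpha> - of_int N < b + \<delta>"
      using orbit_point rounding_error drift unfolding abs_less_iff by linarith+
  qed
qed

definition mech_cuts :: "real \<Rightarrow> nat \<Rightarrow> real set" where
  "mech_cuts \<alpha> n = {of_int N - real i * \<alpha> | N i. i \<le> n}"

lemma mech_word_eq_if_no_cut:
  assumes "z \<le> z'" and no_cut: "{z<..z'} \<inter> mech_cuts \<alpha> n = {}"
  shows "mech_word \<alpha> z' n = mech_word \<alpha> z n"
proof -
  have floor_eq: "\<lfloor>z' + real i * \<alpha>\<rfloor> = \<lfloor>z + real i * \<alpha>\<rfloor>" if "i \<le> n" for i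
  proof (rule ccontr)
    let ?N = "\<lfloor>z' + real i * \<alpha>\<rfloor>"
    assume "?N \<noteq> \<lfloor>z + real i * \<alpha>\<rfloor>"
    then have "\<lfloor>z + real i * \<alpha>\<rfloor> < ?N"
      using assms(1) floor_mono[of "z + real i * \<alpha>" "z' + real i * \<alpha>"] by simp
    then have "z + real i * \<alpha> < of_int ?N"
      by (simp add: floor_less_iff)
    moreover have "of_int ?N \<le> z' + real i * \<alpha>"
      by (rule of_int_floor_le)
    ultimately have "of_int ?N - real i * \<alpha> \<in> {z<..z'}"
      unfolding greaterThanAtMost_iff by linarith
    moreover have "of_int ?N - real i * \<alpha> \<in> mech_cuts \<alpha> n"
      using that by (auto simp: mech_cuts_def)
    ultimately show False
      using no_cut by blast
  qed
  show ?thesis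
  proof (rule nth_equalityI)
    fix i
    assume "i < length (mech_word \<alpha> z' n)"
    then have "i \<le> n" "Suc i \<le> n"
      by simp_all
    then show "mech_word \<alpha> z' n ! i = mech_word \<alpha> z n ! i"
      using floor_eq[of i] floor_eq[of "Suc i"]
      by (simp add: mech_letter_def algebra_simps)
  qed simp
qed

lemma mech_cuts_separated:
  assumes "badly_approximable c \<alpha>" "1 \<le> n"
    and "t \<in> mech_cuts \<alpha> n" "t' \<in> mech_cuts \<alpha> n" "t \<noteq> t'"
  shows "c \<le> n * \<bar>t - t'\<bar>"
proof -
  obtain N i N' i' where t: "t = of_int N - real i * \<alpha>" "i \<le> n"
    and t': "t' = of_int N' - real i' * \<alpha>" "i' \<le> n"
    using assms(3,4) by (auto simp: mech_cuts_def)
  define q where "q = int i - int i'"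
  have diff: "t - t' = - (of_int q * \<alpha> - of_int (N - N'))"
    by (simp add: t t' q_def algebra_simps)
  then have abs_diff: "\<bar>t - t'\<bar> = \<bar>of_int q * \<alpha> - of_int (N - N')\<bar>"
    by (simp only: abs_minus_cancel)
  have "\<bar>of_int q\<bar> \<le> real n"
    using t(2) t'(2) by (simp add: q_def abs_le_iff)
  show ?thesis
  proof (cases "q = 0")
    case True
    then have "t - t' = of_int (N - N')"
      using diff by simp
    moreover have "1 \<le> \<bar>N - N'\<bar>"
      using \<open>t - t' = of_int (N - N')\<close> assms(5) by auto
    ultimately have "1 \<le> \<bar>t - t'\<bar>"
      by (metis of_int_1_le_iff of_int_abs)
    then have "1 \<le> real n * \<bar>t - t'\<bar>"
      using assms(2) mult_mono[of 1 "real n" 1 "\<bar>t - t'\<bar>"] by simp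
    then show ?thesis
      using badly_approximable_le_half[OF assms(1)] by linarith
  next
    case False
    have "c \<le> \<bar>of_int q\<bar> * \<bar>t - t'\<bar>"
      using badly_approximableD[OF assms(1) False, of "N - N'"] by (simp only: abs_diff)
    also have "\<dots> \<le> n * \<bar>t - t'\<bar>"
      using \<open>\<bar>of_int q\<bar> \<le> real n\<close> by (simp add: mult_right_mono)
    finally show ?thesis .
  qed
qed

lemma mech_word_constant_on_interval:
  assumes "badly_approximable c \<alpha>" "1 \<le> n"
  obtains b where "\<And>z'. b < z' \<Longrightarrow> z' < b + c / (2 * n) \<Longrightarrow> mech_word \<alpha> z' n = mech_word \<alpha> z n"
proof -
  define \<delta> where "\<delta> = c / (2 * n)"
  have sep: "2 * \<delta> \<le> \<bar>t - t'\<bar>" if "t \<in> mech_cuts \<alpha> n" "t' \<in> mech_cuts \<alpha> n" "t \<noteq> t'" for t t'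
    using mech_cuts_separated[OF assms that] assms(2) by (simp add: \<delta>_def field_simps)
  show ?thesis
  proof (cases "{z<..<z + \<delta>} \<inter> mech_cuts \<alpha> n = {}")
    case True
    show ?thesis
    proof (rule that[of z], fold \<delta>_def)
      fix z'
      assume "z < z'" "z' < z + \<delta>"
      then have "{z<..z'} \<subseteq> {z<..<z + \<delta>}"
        by auto
      then have "{z<..z'} \<inter> mech_cuts \<alpha> n = {}"
        using True by blast
      with \<open>z < z'\<close> show "mech_word \<alpha> z' n = mech_word \<alpha> z n"
        by (intro mech_word_eq_if_no_cut) simp_all
    qed
  next
    case False
    then obtain t where t: "t \<in> mech_cuts \<alpha> n" "z < t" "t < z + \<delta>"
      by auto
    show ?thesis
    proof (rule that[of "z - \<delta>"], fold \<delta>_def)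
      fix z'
      assume "z - \<delta> < z'" "z' < z - \<delta> + \<delta>"
      have "{z'<..z} \<inter> mech_cuts \<alpha> n = {}"
      proof (rule equals0I)
        fix t'
        assume "t' \<in> {z'<..z} \<inter> mech_cuts \<alpha> n"
        then have "t' \<in> mech_cuts \<alpha> n" "t \<noteq> t'" "\<bar>t - t'\<bar> < 2 * \<delta>"
          using t \<open>z - \<delta> < z'\<close> by auto
        then show False
          using sep[OF t(1)] by fastforce
      qed
      with \<open>z' < z - \<delta> + \<delta>\<close> show "mech_word \<alpha> z' n = mech_word \<alpha> z n"
        by (intro mech_word_eq_if_no_cut[symmetric]) simp_all
    qed
  qed
qed

lemma mech_word_linearly_recurrent:
  assumes "badly_approximable c \<alpha>" "1 \<le> n"
  shows "\<exists>j. j + n \<le> (nat \<lceil>8 / c\<^sup>2\<rceil> + 1) * n \<and> mech_word \<alpha> (z + j * \<alpha>) n = mech_word \<alpha> z' n"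
proof -
  have c: "0 < c"
    using assms(1) by (simp add: badly_approximable_def)
  obtain b where b: "\<And>u. b < u \<Longrightarrow> u < b + c / (2 * n) \<Longrightarrow> mech_word \<alpha> u n = mech_word \<alpha> z' n"
    using mech_word_constant_on_interval[OF assms] by blast
  obtain j :: nat and N :: int where j: "real j < 4 / (c * (c / (2 * n)))"
    and N: "b < z + j * \<alpha> - N" "z + j * \<alpha> - N < b + c / (2 * n)"
    using orbit_enters_interval[OF assms(1), where b=b and x=z and \<delta>="c / (2 * n)"] c assms(2)
    by auto
  have "mech_word \<alpha> (z + j * \<alpha>) n = mech_word \<alpha> (z + j * \<alpha> - N) n"
    using mech_word_add_int[of \<alpha> "z + j * \<alpha> - N" N n] by simp
  also have "\<dots> = mech_word \<alpha> z' n"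
    using b N by blast
  finally have word: "mech_word \<alpha> (z + j * \<alpha>) n = mech_word \<alpha> z' n" .
  have "real j < 8 / c\<^sup>2 * n"
    using j c by (simp add: power2_eq_square field_simps)
  also have "\<dots> \<le> real (nat \<lceil>8 / c\<^sup>2\<rceil>) * n"
    using real_nat_ceiling_ge[of "8 / c\<^sup>2"] by (intro mult_right_mono) simp_all
  finally have "j < nat \<lceil>8 / c\<^sup>2\<rceil> * n"
    by (simp only: of_nat_mult[symmetric] of_nat_less_iff)
  then show ?thesis
    using word by (intro exI[of _ j]) (simp add: algebra_simps)
qed

section \<open>Subadditive cocycles over linearly recurrent systems\<close>

lemma subadditive_le_linear:
  fixes M :: "nat \<Rightarrow> real"
  assumes nonneg: "\<And>n. 0 \<le> M n" and subadd: "\<And>m n. M (m + n) \<le> M m + M n"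
    and "0 \<le> A" "1 \<le> n" and Mn: "M n \<le> A * n"
  shows "M m \<le> A * m + (\<Sum>r<n. M r)"
proof (induction m rule: less_induct)
  case (less m)
  show ?case
  proof (cases "m < n")
    case True
    then have "M m \<le> (\<Sum>r<n. M r)"
      using nonneg by (intro member_le_sum) auto
    then show ?thesis
      using \<open>0 \<le> A\<close> by (simp add: add_increasing)
  next
    case False
    then have "M m \<le> M n + M (m - n)"
      using subadd[of n "m - n"] by simp
    also have "\<dots> \<le> A * n + (A * (m - n) + (\<Sum>r<n. M r))"
      using Mn less.IH[of "m - n"] \<open>1 \<le> n\<close> False by simp
    also have "\<dots> = A * m + (\<Sum>r<n. M r)"
      using False by (simp add: algebra_simps of_nat_diff)
    finally show ?thesis .
  qed
qed

lemma Fekete_bounds: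
  fixes M :: "nat \<Rightarrow> real"
  assumes nonneg: "\<And>n. 0 \<le> M n" and subadd: "\<And>m n. M (m + n) \<le> M m + M n"
  obtains a where "\<And>n. 1 \<le> n \<Longrightarrow> a * n \<le> M n"
    and "\<And>\<delta>. 0 < \<delta> \<Longrightarrow> \<exists>N. \<forall>m. M m \<le> (a + \<delta>) * m + N"
proof
  define S where "S = (\<lambda>n. M n / n) ` {1..}"
  have S_bdd: "bdd_below S"
    using nonneg by (auto simp: S_def intro!: bdd_belowI[of _ 0])
  show "Inf S * n \<le> M n" if "1 \<le> n" for n
  proof -
    have "Inf S \<le> M n / n"
      using that by (intro cInf_lower[OF _ S_bdd]) (auto simp: S_def)
    then show ?thesis
      using that by (simp add: le_divide_eq)
  qed
  have "0 \<le> Inf S"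
    using nonneg by (intro cInf_greatest) (auto simp: S_def)
  fix \<delta> :: real
  assume "0 < \<delta>"
  then obtain n where n: "1 \<le> n" "M n / n < Inf S + \<delta>"
    using cInf_less_iff[of S "Inf S + \<delta>"] S_bdd by (auto simp: S_def)
  then have "M n \<le> (Inf S + \<delta>) * n"
    by (simp add: divide_less_eq)
  then have "M m \<le> (Inf S + \<delta>) * m + (\<Sum>r<n. M r)" for m
    using subadditive_le_linear[OF nonneg subadd _ n(1)] \<open>0 \<le> Inf S\<close> \<open>0 < \<delta>\<close> by simp
  then show "\<exists>N. \<forall>m. M m \<le> (Inf S + \<delta>) * m + N"
    by blast
qed

locale recurrent_subadditive_cocycle =
  fixes f :: "'z \<Rightarrow> nat \<Rightarrow> real" and T :: "'z \<Rightarrow> nat \<Rightarrow> 'z" and B :: real and K :: nat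
  assumes nonneg: "0 \<le> f z n"
    and zero: "f z 0 = 0"
    and one_le: "f z 1 \<le> B"
    and subadditive: "f z (m + n) \<le> f z m + f (T z m) n"
    and recurrent: "1 \<le> n \<Longrightarrow> \<exists>j. j + n \<le> K * n \<and> f (T z j) n = f z' n"
begin

lemma linear_bound: "f z n \<le> B * n"
proof (induction n arbitrary: z)
  case 0
  then show ?case
    by (simp add: zero)
next
  case (Suc n)
  have "f z (1 + n) \<le> f z 1 + f (T z 1) n"
    by (rule subadditive)
  also have "\<dots> \<le> B + B * n"
    using one_le Suc.IH by (rule add_mono)
  finally show ?case
    by (simp add: algebra_simps)
qed

definition sup_cocycle :: "nat \<Rightarrow> real" where
  "sup_cocycle n = (SUP z. f z n)"

lemma le_sup_cocycle: "f z n \<le> sup_cocycle n"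
  unfolding sup_cocycle_def
  by (rule cSUP_upper) (auto intro: bdd_aboveI2 linear_bound)

lemma sup_cocycle_nonneg: "0 \<le> sup_cocycle n"
  using nonneg le_sup_cocycle order_trans by blast

lemma sup_cocycle_subadditive: "sup_cocycle (m + n) \<le> sup_cocycle m + sup_cocycle n"
  unfolding sup_cocycle_def[of "m + n"]
proof (rule cSUP_least)
  fix z
  show "f z (m + n) \<le> sup_cocycle m + sup_cocycle n"
    using subadditive[of z m n] le_sup_cocycle[of z m] le_sup_cocycle[of "T z m" n] by linarith
qed simp

lemma sup_cocycle_recurrence:
  fixes A N :: real
  assumes "1 \<le> n" and bound: "\<And>m. sup_cocycle m \<le> A * m + N"
  shows "sup_cocycle (K * n) \<le> A * real (K * n - n) + 2 * N + f z n"
  unfolding sup_cocycle_def[of "K * n"]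
proof (rule cSUP_least)
  fix z'
  obtain j where j: "j + n \<le> K * n" "f (T z' j) n = f z n"
    using recurrent[OF assms(1)] by blast
  define r where "r = K * n - j - n"
  have Kn: "K * n = j + (n + r)"
    using j(1) by (simp add: r_def)
  have "f z' (K * n) \<le> f z' j + (f (T z' j) n + f (T (T z' j) n) r)"
    using subadditive[of z' j "n + r"] subadditive[of "T z' j" n r] by (simp add: Kn)
  also have "\<dots> \<le> (A * j + N) + (f z n + (A * r + N))"
    using le_sup_cocycle[of z' j] le_sup_cocycle[of "T (T z' j) n" r] bound[of j] bound[of r] j(2)
    by linarith
  also have "\<dots> = A * real (K * n - n) + 2 * N + f z n"
    by (simp add: Kn algebra_simps)
  finally show "f z' (K * n) \<le> A * real (K * n - n) + 2 * N + f z n" .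
qed simp

lemma recurrence_constant_pos: "1 \<le> K"
  using recurrent[of 1] by fastforce

lemma deviation_bound:
  fixes a \<delta> N :: real
  assumes "1 \<le> n" "0 \<le> \<delta>"
    and a_le: "\<And>m. 1 \<le> m \<Longrightarrow> a * m \<le> sup_cocycle m"
    and bound: "\<And>m. sup_cocycle m \<le> (a + \<delta>) * m + N"
  shows "\<bar>f z n - a * n\<bar> \<le> \<delta> * K * n + 2 * N"
proof -
  have upper: "f z n \<le> (a + \<delta>) * n + N"
    using le_sup_cocycle bound order_trans by blast
  have "a * (K * n) \<le> (a + \<delta>) * (K * n - n) + 2 * N + f z n"
    using a_le[of "K * n"] sup_cocycle_recurrence[OF assms(1) bound, of z] recurrence_constant_pos assms(1)
    by simp
  moreover have "0 \<le> \<delta> * n"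
    using assms(2) by simp
  ultimately have lower: "a * n - \<delta> * K * n \<le> 2 * N + f z n"
    using recurrence_constant_pos assms(1) by (simp add: of_nat_diff algebra_simps)
  have "\<delta> * n \<le> \<delta> * K * n"
    using assms(2) recurrence_constant_pos mult_right_mono[of 1 "real K" "real n"]
    by (simp add: mult_left_mono mult.assoc)
  moreover have "0 \<le> N"
    using bound[of 0] sup_cocycle_nonneg[of 0] by simp
  ultimately show ?thesis
    using upper lower by (simp add: abs_le_iff algebra_simps)
qed

theorem averages_converge_uniformly: "\<exists>a. \<forall>\<epsilon>>0. \<exists>N. \<forall>z n. N \<le> n \<longrightarrow> \<bar>f z n / n - a\<bar> \<le> \<epsilon>"
proof -
  obtain a where a_le: "\<And>n. 1 \<le> n \<Longrightarrow> a * n \<le> sup_cocycle n"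
    and Fekete: "\<And>\<delta>. 0 < \<delta> \<Longrightarrow> \<exists>N. \<forall>m. sup_cocycle m \<le> (a + \<delta>) * m + N"
    using Fekete_bounds[OF sup_cocycle_nonneg sup_cocycle_subadditive] by blast
  have "\<exists>N'. \<forall>z n. N' \<le> n \<longrightarrow> \<bar>f z n / n - a\<bar> \<le> \<epsilon>" if "0 < \<epsilon>" for \<epsilon>
  proof -
    define \<delta> where "\<delta> = \<epsilon> / (2 * K)"
    have \<delta>: "0 < \<delta>" "\<delta> * K = \<epsilon> / 2"
      using that recurrence_constant_pos by (auto simp: \<delta>_def)
    then obtain N where N: "\<And>m. sup_cocycle m \<le> (a + \<delta>) * m + N"
      using Fekete by blast
    show ?thesis
    proof (intro exI allI impI)
      fix z n
      assume "nat \<lceil>4 * N / \<epsilon>\<rceil> + 1 \<le> n"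
      then have "real (nat \<lceil>4 * N / \<epsilon>\<rceil> + 1) \<le> n"
        by (simp only: of_nat_le_iff)
      then have n: "4 * N / \<epsilon> \<le> n" "1 \<le> n"
        using real_nat_ceiling_ge[of "4 * N / \<epsilon>"] by auto
      have "\<bar>f z n - a * n\<bar> \<le> \<delta> * K * n + 2 * N"
        using deviation_bound[OF n(2) _ a_le N] \<delta>(1) by simp
      also have "\<dots> \<le> \<epsilon> * n"
        using n(1) \<open>0 < \<epsilon>\<close> by (simp add: \<delta>(2) divide_le_eq mult.commute)
      finally have "\<bar>f z n - a * n\<bar> \<le> \<epsilon> * n" .
      moreover have "f z n / n - a = (f z n - a * n) / n"
        using n(2) by (simp add: field_simps)
      ultimately show "\<bar>f z n / n - a\<bar> \<le> \<epsilon>"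
        using n(2) by (simp add: abs_divide divide_le_eq)
    qed
  qed
  then show ?thesis
    by blast
qed

end

section \<open>Subadditive functions on Sturmian words\<close>

(* The value at n = 0 is fixed to 0 because nothing is assumed about F at the empty word. *)
definition word_cocycle :: "real \<Rightarrow> (nat list \<Rightarrow> real) \<Rightarrow> real \<Rightarrow> nat \<Rightarrow> real" where
  "word_cocycle \<alpha> F z n = (if n = 0 then 0 else F (mech_word \<alpha> z n))"

lemma word_cocycle_recurrent_subadditive:
  fixes \<alpha> :: real and F :: "nat list \<Rightarrow> real" and K :: nat
  assumes "0 < \<alpha>" "\<alpha> < 1"
    and recurrent: "\<And>z z' n. 1 \<le> n \<Longrightarrow>
      \<exists>j::nat. j + n \<le> K * n \<and> mech_word \<alpha> (z + j * \<alpha>) n = mech_word \<alpha> z' n"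
    and nonneg: "\<forall>w\<in>sturm_words \<alpha>. F w \<ge> 0"
    and subadditive: "subadditive_on (sturm_words \<alpha>) F"
  shows "recurrent_subadditive_cocycle (word_cocycle \<alpha> F) (\<lambda>z j. z + j * \<alpha>) (max (F [0]) (F [1])) K"
proof
  have in_words: "mech_word \<alpha> z n \<in> sturm_words \<alpha>" if "1 \<le> n" for z n
    using that unfolding sturm_words_eq_mech_words[OF assms(1,2)] by blast
  show "0 \<le> word_cocycle \<alpha> F z n" for z n
    using nonneg in_words by (simp add: word_cocycle_def Suc_le_eq)
  show "word_cocycle \<alpha> F z 0 = 0" for z
    by (simp add: word_cocycle_def)
  show "word_cocycle \<alpha> F z 1 \<le> max (F [0]) (F [1])" for z
  proof -
    have "mech_word \<alpha> z 1 = [mech_letter \<alpha> z]"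
      by (simp add: mech_word_def)
    then show ?thesis
      using mech_letter_le_1[OF assms(1,2), of z] by (auto simp: word_cocycle_def le_Suc_eq)
  qed
  show "word_cocycle \<alpha> F z (m + n) \<le> word_cocycle \<alpha> F z m + word_cocycle \<alpha> F (z + m * \<alpha>) n"
    for z m n
  proof (cases "m = 0 \<or> n = 0")
    case False
    then show ?thesis
      using subadditive in_words[of m z] in_words[of n "z + m * \<alpha>"] in_words[of "m + n" z]
      by (simp add: word_cocycle_def subadditive_on_def mech_word_append)
  qed (auto simp: word_cocycle_def)
  show "\<exists>j. j + n \<le> K * n \<and> word_cocycle \<alpha> F (z + j * \<alpha>) n = word_cocycle \<alpha> F z' n"
    if "1 \<le> n" for z z' n
    using recurrent[OF that, of z z'] by (auto simp: word_cocycle_def)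
qed

lemma word_limit_if_mech_words_linearly_recurrent:
  fixes \<alpha> :: real and F :: "nat list \<Rightarrow> real" and K :: nat
  assumes "0 < \<alpha>" "\<alpha> < 1"
    and recurrent: "\<And>z z' n. 1 \<le> n \<Longrightarrow>
      \<exists>j::nat. j + n \<le> K * n \<and> mech_word \<alpha> (z + j * \<alpha>) n = mech_word \<alpha> z' n"
    and "\<forall>w\<in>sturm_words \<alpha>. F w \<ge> 0" "subadditive_on (sturm_words \<alpha>) F"
  shows "\<exists>L. word_limit (sturm_words \<alpha>) (\<lambda>w. F w / real (length w)) L"
proof -
  interpret recurrent_subadditive_cocycle "word_cocycle \<alpha> F" "\<lambda>z j. z + j * \<alpha>" "max (F [0]) (F [1])" K
    using word_cocycle_recurrent_subadditive[OF assms] .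
  obtain a where a: "\<forall>\<epsilon>>0. \<exists>N. \<forall>z n. N \<le> n \<longrightarrow> \<bar>word_cocycle \<alpha> F z n / n - a\<bar> \<le> \<epsilon>"
    using averages_converge_uniformly by blast
  have "\<exists>N. \<forall>w\<in>sturm_words \<alpha>. N \<le> length w \<longrightarrow> \<bar>F w / length w - a\<bar> \<le> \<epsilon>" if "0 < \<epsilon>" for \<epsilon>
  proof -
    obtain N where N: "\<And>z n. N \<le> n \<Longrightarrow> \<bar>word_cocycle \<alpha> F z n / n - a\<bar> \<le> \<epsilon>"
      using a \<open>0 < \<epsilon>\<close> by blast
    have "\<bar>F w / length w - a\<bar> \<le> \<epsilon>" if "w \<in> sturm_words \<alpha>" "N \<le> length w" for w
    proof -
      have "w \<in> {mech_word \<alpha> z n | z n. 1 \<le> n}"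
        using that(1) sturm_words_eq_mech_words[OF assms(1,2)] by simp
      then obtain z n where "1 \<le> n" "w = mech_word \<alpha> z n"
        by blast
      then show ?thesis
        using N[of "length w" z] that(2) by (simp add: word_cocycle_def)
    qed
    then show ?thesis
      by blast
  qed
  then show ?thesis
    unfolding word_limit_def by blast
qed

theorem lemma4:
  fixes \<alpha> :: real and C :: real and F :: "nat list \<Rightarrow> real"
  assumes "0 < \<alpha>" and "\<alpha> < 1" and "\<alpha> \<notin> \<rat>"
    and "\<forall>n\<ge>1. \<bar>cf_digit \<alpha> n\<bar> \<le> C"
    and "\<forall>w\<in>sturm_words \<alpha>. F w \<ge> 0"
    and "subadditive_on (sturm_words \<alpha>) F"
  shows "\<exists>L. word_limit (sturm_words \<alpha>) (\<lambda>w. F w / real (length w)) L"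
proof -
  have "badly_approximable (1 / (2 * (C + 1)\<^sup>2)) \<alpha>"
    using badly_approximable_if_bounded_cf_digits[OF assms(1-4)] .
  from mech_word_linearly_recurrent[OF this]
  show ?thesis
    by (rule word_limit_if_mech_words_linearly_recurrent[OF assms(1,2) _ assms(5,6)])
qed

end
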